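(* Let $C_{\mathrm{hyp}}\ge1$ and let $t=v-h(r)$ on the domain of outer communication $\{r>r_+\}$ of a subextreme Kerr spacetime, where $h(r)=2(r-r_+)+4M\log\left(\frac{r}{r_+}\right)+\frac{3M^2(r_+-r)^2}{r_+r^2}+2M\arctan\left(\frac{(C_{\mathrm{hyp}}-1)M}{r}\right)-2M\arctan\left(\frac{(C_{\mathrm{hyp}}-1)M}{r_+}\right)$. Then $t$ is a regular, future hyperboloidal time function. Further, $h(r_+)=0$, $h'(r)\ge0$ for $r\ge r_+$, $\lim_{r\to\infty}h(r)/r=2$, and $\lim_{r\to\infty}\frac{r^2}{M^2}V^a\nabla_at=C_{\mathrm{hyp}}$.
   Context: Kerr spacetime with $M>0$, $|a|<M$, in ingoing Eddington–Finkelstein coordinates $(v,r,\theta,\phi)$ with metric $g_{ab}=-2(dr)_{(a}(dv)_{b)}+2a\sin^2\theta(d\phi)_{(a}(dr)_{b)}+\frac{4Mar\sin^2\theta}{\Sigma}(d\phi)_{(a}(dv)_{b)}+\frac{\Delta-a^2\sin^2\theta}{\Sigma}(dv)_a(dv)_b+\frac{a^2\sin^2\theta\Delta-(a^2+r^2)^2}{\Sigma}\sin^2\theta(d\phi)_a(d\phi)_b-\Sigma(d\theta)_a(d\theta)_b$, $\Sigma=r^2+a^2\cos^2\theta$, $\Delta=r^2-2Mr+a^2$, $r_+=M+\sqrt{M^2-a^2}$. Vector fields $V^a=\partial_v+\frac{\Delta}{2(a^2+r^2)}\partial_r+\frac{a}{a^2+r^2}\partial_\phi$, $Y^a=-\partial_r$.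 A function $t=v-k(r)$ is a regular, future hyperboloidal time function if: (a) $k$ is smooth in an open neighbourhood of $[r_+,\infty)$; (b) $K(R)=k'(1/R)$ is smooth in an open neighbourhood of $[0,1/r_+]$; (c) the level sets of $t$ are strictly spacelike in $\{r>r_+\}$; (d) $\lim_{r\to\infty}\frac{r^2}{M^2}V^a\nabla_at$ exists and is positive; (e) $\lim_{r\to\infty}Y^a\nabla_at=2$. *)

theory Defs
  imports "HOL-Analysis.Analysis"
begin

text \<open>Kerr data in ingoing Eddington--Finkelstein coordinates (v,r,theta,phi).\<close>

definition kerr_Sigma :: "real \<Rightarrow> real \<Rightarrow> real \<Rightarrow> real" where
  "kerr_Sigma a r th = r^2 + a^2 * (cos th)^2"

definition kerr_Delta :: "real \<Rightarrow> real \<Rightarrow> real \<Rightarrow> real" where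
  "kerr_Delta M a r = r^2 - 2*M*r + a^2"

definition kerr_rplus :: "real \<Rightarrow> real \<Rightarrow> real" where
  "kerr_rplus M a = M + sqrt (M^2 - a^2)"

text \<open>The metric g_ab X^a X^b at a point with coordinates r, theta, applied to the
  vector X = (Xv, Xr, Xth, Xph) (components w.r.t. the coordinate basis).\<close>
definition kerr_g :: "real \<Rightarrow> real \<Rightarrow> real \<Rightarrow> real \<Rightarrow> real \<Rightarrow> real \<Rightarrow> real \<Rightarrow> real \<Rightarrow> real" where
  "kerr_g M a r th Xv Xr Xth Xph =
     (let S = kerr_Sigma a r th; D = kerr_Delta M a r; s2 = (sin th)^2 in
       - 2 * Xr * Xv
       + 2 * a * s2 * Xph * Xr
       + (4 * M * a * r * s2 / S) * Xph * Xv
       + ((D - a^2 * s2) / S) * Xv^2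
       + ((a^2 * s2 * D - (a^2 + r^2)^2) / S) * s2 * Xph^2
       - S * Xth^2)"

definition smooth_on :: "(real \<Rightarrow> real) \<Rightarrow> real set \<Rightarrow> bool" where
  "smooth_on f U \<longleftrightarrow> (\<forall>n. \<forall>x\<in>U. (deriv ^^ n) f differentiable (at x))"

text \<open>For t = v - k(r): the differential is dt = dv - k'(r) dr, so
  X^a nabla_a t = Xv - k'(r) Xr.\<close>
definition dt_apply :: "(real \<Rightarrow> real) \<Rightarrow> real \<Rightarrow> real \<Rightarrow> real \<Rightarrow> real" where
  "dt_apply k r Xv Xr = Xv - deriv k r * Xr"

text \<open>V^a nabla_a t with V = d_v + Delta/(2(a^2+r^2)) d_r + a/(a^2+r^2) d_phi.\<close>
definition V_dt :: "real \<Rightarrow> real \<Rightarrow> (real \<Rightarrow> real) \<Rightarrow> real \<Rightarrow> real" where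
  "V_dt M a k r = dt_apply k r 1 (kerr_Delta M a r / (2 * (a^2 + r^2)))"

text \<open>Y^a nabla_a t with Y = - d_r.\<close>
definition Y_dt :: "(real \<Rightarrow> real) \<Rightarrow> real \<Rightarrow> real" where
  "Y_dt k r = dt_apply k r 0 (-1)"

definition regular_future_hyperboloidal :: "real \<Rightarrow> real \<Rightarrow> (real \<Rightarrow> real) \<Rightarrow> bool" where
  "regular_future_hyperboloidal M a k \<longleftrightarrow>
     (let rp = kerr_rplus M a in
       \<comment> \<open>(a)\<close>
       (\<exists>U. open U \<and> {rp..} \<subseteq> U \<and> smooth_on k U) \<and>
       \<comment> \<open>(b)\<close>
       (\<exists>U K. open U \<and> {0..1/rp} \<subseteq> U \<and> smooth_on K U \<and>
              (\<forall>R\<in>U. R > 0 \<longrightarrow> K R = deriv k (1/R))) \<and>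
       \<comment> \<open>(c): every nonzero vector tangent to a level set of t is spacelike,
             at every point with r > r_+ (and theta in (0,pi))\<close>
       (\<forall>r th Xv Xr Xth Xph. r > rp \<and> 0 < th \<and> th < pi \<and>
              (Xv, Xr, Xth, Xph) \<noteq> (0, 0, 0, 0) \<and> dt_apply k r Xv Xr = 0
              \<longrightarrow> kerr_g M a r th Xv Xr Xth Xph < 0) \<and>
       \<comment> \<open>(d)\<close>
       (\<exists>L>0. ((\<lambda>r. r^2 / M^2 * V_dt M a k r) \<longlongrightarrow> L) at_top) \<and>
       \<comment> \<open>(e)\<close>
       ((\<lambda>r. Y_dt k r) \<longlongrightarrow> 2) at_top)"

end

theory Submission
  imports Defs "HOL-Computational_Algebra.Polynomial" "HOL-Real_Asymp.Real_Asymp"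
begin

text \<open>
  With \<open>c = (C\<^sub>h\<^sub>y\<^sub>p - 1) M\<close>, the derivative
  \<open>h' = 2 + 4M/r + 6M\<^sup>2(r - r\<^sub>+)/r\<^sup>3 - 2Mc/(r\<^sup>2 + c\<^sup>2)\<close> is a rational function of \<open>r\<close>
  and of \<open>1/r\<close> with nonvanishing denominators, which gives the smoothness conditions and,
  by asymptotic expansion, the limits at infinity.
  A tangent vector of a level set of \<open>t\<close> has \<open>X\<^sup>v = h'(r) X\<^sup>r\<close>; completing the square in
  \<open>X\<^sup>\<phi>\<close> shows that it is spacelike once \<open>\<Delta>p\<^sup>2 - 2(r\<^sup>2 + a\<^sup>2)p + a\<^sup>2 < 0\<close> at \<open>p = h'(r)\<close>.
  This quadratic is convex in \<open>p\<close> and \<open>1 \<le> h' \<le> h'|\<^sub>c\<^sub>=\<^sub>0\<close>, so it suffices to check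
  \<open>p = 1\<close>, which is immediate, and \<open>p = h'|\<^sub>c\<^sub>=\<^sub>0\<close>, which is a polynomial inequality in
  \<open>r - r\<^sub>+\<close>, \<open>\<surd>(M\<^sup>2 - a\<^sup>2)\<close> and \<open>M - \<surd>(M\<^sup>2 - a\<^sup>2)\<close> with nonnegative coefficients.
\<close>

section \<open>Smoothness of functions with rational derivative\<close>

lemma higher_deriv_cong_open:
  fixes f g :: "real \<Rightarrow> real"
  assumes "open U" "\<And>x. x \<in> U \<Longrightarrow> f x = g x" "x \<in> U"
  shows "(deriv ^^ n) f x = (deriv ^^ n) g x"
  using assms(3)
proof (induction n arbitrary: x)
  case 0
  then show ?case using assms(2) by simp
next
  case (Suc n)
  have "eventually (\<lambda>y. y \<in> U) (nhds x)"
    using assms(1) Suc.prems by (rule eventually_nhds_in_open)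
  then have "eventually (\<lambda>y. (deriv ^^ n) f y = (deriv ^^ n) g y) (nhds x)"
    by eventually_elim (rule Suc.IH)
  then show ?case by (simp add: deriv_cong_ev)
qed

lemma smooth_on_cong:
  assumes "open U" "\<And>x. x \<in> U \<Longrightarrow> f x = g x" "smooth_on f U"
  shows "smooth_on g U"
  unfolding smooth_on_def
proof (intro allI ballI)
  fix n x assume x: "x \<in> U"
  have "(deriv ^^ n) f differentiable (at x)"
    using assms(3) x unfolding smooth_on_def by blast
  moreover have "\<And>y. y \<in> U \<Longrightarrow> (deriv ^^ n) f y = (deriv ^^ n) g y"
    using higher_deriv_cong_open[of U f g] assms(1,2) by blast
  ultimately show "(deriv ^^ n) g differentiable (at x)"
    using has_derivative_transform_within_open[OF _ assms(1) x] unfolding differentiable_def by blast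
qed

lemma smooth_on_antiderivative:
  assumes "open U" "smooth_on g U" "\<And>x. x \<in> U \<Longrightarrow> (f has_real_derivative g x) (at x)"
  shows "smooth_on f U"
  unfolding smooth_on_def
proof (intro allI ballI)
  fix n x assume x: "x \<in> U"
  show "(deriv ^^ n) f differentiable (at x)"
  proof (cases n)
    case 0
    then show ?thesis using assms(3)[OF x] real_differentiable_def by auto
  next
    case (Suc k)
    have "smooth_on (deriv f) U"
      by (rule smooth_on_cong[OF assms(1) _ assms(2)]) (use assms(3) DERIV_imp_deriv in metis)
    then have "(deriv ^^ k) (deriv f) differentiable (at x)"
      using x unfolding smooth_on_def by blast
    then show ?thesis using Suc by (simp add: funpow_Suc_right del: funpow.simps)
  qed
qed

lemma has_real_derivative_poly_fraction:
  fixes P D :: "real poly"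
  assumes "poly D x \<noteq> 0"
  shows "((\<lambda>x. poly P x / poly D x ^ m) has_real_derivative
          poly (pderiv P * D - smult (of_nat m) (P * pderiv D)) x / poly D x ^ Suc m) (at x)"
proof -
  have "((\<lambda>x. poly P x / poly D x ^ m) has_real_derivative
     (poly (pderiv P) x * poly D x ^ m - poly P x * (of_nat m * (poly (pderiv D) x * poly D x ^ (m - Suc 0))))
       / (poly D x ^ m * poly D x ^ m)) (at x)"
    using assms by (intro DERIV_divide DERIV_power poly_DERIV) auto
  moreover have "(poly (pderiv P) x * poly D x ^ m - poly P x * (of_nat m * (poly (pderiv D) x * poly D x ^ (m - Suc 0))))
       / (poly D x ^ m * poly D x ^ m) = poly (pderiv P * D - smult (of_nat m) (P * pderiv D)) x / poly D x ^ Suc m"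
    using assms by (cases m) (simp_all add: field_simps)
  ultimately show ?thesis by simp
qed

lemma higher_deriv_poly_fraction:
  fixes P D :: "real poly"
  assumes "open U" "\<And>x. x \<in> U \<Longrightarrow> poly D x \<noteq> 0"
  shows "\<exists>Q k. \<forall>x\<in>U. (deriv ^^ n) (\<lambda>x. poly P x / poly D x ^ m) x = poly Q x / poly D x ^ k"
proof (induction n arbitrary: P m)
  case 0
  then show ?case by auto
next
  case (Suc n)
  define P' where "P' = pderiv P * D - smult (of_nat m) (P * pderiv D)"
  have deriv_eq: "\<And>x. x \<in> U \<Longrightarrow> deriv (\<lambda>x. poly P x / poly D x ^ m) x = poly P' x / poly D x ^ Suc m"
    unfolding P'_def using assms(2) by (intro DERIV_imp_deriv has_real_derivative_poly_fraction)
  obtain Q k where Q: "\<forall>x\<in>U. (deriv ^^ n) (\<lambda>x. poly P' x / poly D x ^ Suc m) x = poly Q x / poly D x ^ k"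
    using Suc.IH by blast
  have "(deriv ^^ Suc n) (\<lambda>x. poly P x / poly D x ^ m) x = poly Q x / poly D x ^ k" if "x \<in> U" for x
    using higher_deriv_cong_open[OF assms(1) deriv_eq that, where n=n] Q that
    by (simp add: funpow_Suc_right del: funpow.simps)
  then show ?case by blast
qed

lemma smooth_on_poly_fraction:
  fixes P D :: "real poly"
  assumes "open U" "\<And>x. x \<in> U \<Longrightarrow> poly D x \<noteq> 0"
  shows "smooth_on (\<lambda>x. poly P x / poly D x) U"
  unfolding smooth_on_def
proof (intro allI ballI)
  fix n x assume x: "x \<in> U"
  obtain Q k where Q: "\<And>y. y \<in> U \<Longrightarrow> poly Q y / poly D y ^ k = (deriv ^^ n) (\<lambda>x. poly P x / poly D x) y"
    using higher_deriv_poly_fraction[OF assms, of n P 1] by auto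
  obtain Df where "((\<lambda>x. poly Q x / poly D x ^ k) has_derivative Df) (at x)"
    using has_real_derivative_poly_fraction[OF assms(2)[OF x]] unfolding has_field_derivative_def by blast
  then have "((deriv ^^ n) (\<lambda>x. poly P x / poly D x) has_derivative Df) (at x)"
    by (rule has_derivative_transform_within_open[OF _ assms(1) x]) (rule Q)
  then show "(deriv ^^ n) (\<lambda>x. poly P x / poly D x) differentiable (at x)"
    unfolding differentiable_def by blast
qed

section \<open>Kerr geometry\<close>

lemma subextremal_kerr_rplus:
  assumes "\<bar>a\<bar> < M"
  shows "kerr_rplus M a = M + sqrt (M^2 - a^2)" "0 < sqrt (M^2 - a^2)" "sqrt (M^2 - a^2) \<le> M"
    "(sqrt (M^2 - a^2))^2 = M^2 - a^2"
proof -
  have "a^2 < M^2"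
    using assms by (metis abs_ge_zero abs_less_iff power2_abs power_strict_mono zero_less_numeral)
  then show "kerr_rplus M a = M + sqrt (M^2 - a^2)" "0 < sqrt (M^2 - a^2)"
    "(sqrt (M^2 - a^2))^2 = M^2 - a^2"
    by (simp_all add: kerr_rplus_def)
  have "sqrt (M^2 - a^2) \<le> sqrt (M^2)"
    by (rule real_sqrt_le_mono) simp
  then show "sqrt (M^2 - a^2) \<le> M"
    using assms by simp
qed

lemma kerr_rplus_pos:
  assumes "\<bar>a\<bar> < M"
  shows "0 < kerr_rplus M a"
  using subextremal_kerr_rplus(1,2)[OF assms] assms by linarith

lemma kerr_Delta_pos:
  assumes "\<bar>a\<bar> < M" "kerr_rplus M a < r"
  shows "0 < kerr_Delta M a r"
proof -
  define y where "y = sqrt (M^2 - a^2)"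
  note y = subextremal_kerr_rplus[OF assms(1), folded y_def]
  have "kerr_Delta M a r = (r - (M + y)) * (r - (M - y))"
    unfolding kerr_Delta_def using y(4) by algebra
  then show ?thesis using assms(2) y by simp
qed

lemma kerr_g_tangent_square:
  fixes M a r th p Xr Xth Xph :: real
  defines "S \<equiv> kerr_Sigma a r th" and "s \<equiv> (sin th)^2" and "D \<equiv> kerr_Delta M a r"
    and "\<rho> \<equiv> r^2 + a^2"
  assumes "S \<noteq> 0"
  shows "s * (a^2 * s * D - \<rho>^2) * S * (kerr_g M a r th (p*Xr) Xr Xth Xph + S*Xth^2)
       = (s * (a^2 * s * D - \<rho>^2) * Xph + a * s * (S + 2*M*r*p) * Xr)^2
         - S^2 * s * (D*p^2 - 2*\<rho>*p + a^2 * s) * Xr^2"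
proof -
  have S: "S = r^2 + a^2*(1 - s)"
    unfolding S_def s_def kerr_Sigma_def by (simp add: cos_squared_eq)
  have "S * (kerr_g M a r th (p*Xr) Xr Xth Xph + S*Xth^2)
      = - 2*Xr*(p*Xr)*S + 2*a * s*Xph*Xr*S + 4*M*a*r * s*Xph*(p*Xr)
        + (D - a^2 * s)*(p*Xr)^2 + (a^2 * s * D - \<rho>^2)* s*Xph^2"
    using assms(5) unfolding kerr_g_def Let_def S_def[symmetric] s_def[symmetric] D_def[symmetric] \<rho>_def
    by (simp add: field_simps)
  then have "s * (a^2 * s * D - \<rho>^2) * S * (kerr_g M a r th (p*Xr) Xr Xth Xph + S*Xth^2)
      = s * (a^2 * s * D - \<rho>^2) * (- 2*Xr*(p*Xr)*S + 2*a * s*Xph*Xr*S + 4*M*a*r * s*Xph*(p*Xr)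
        + (D - a^2 * s)*(p*Xr)^2 + (a^2 * s*D - \<rho>^2) * s*Xph^2)"
    by (simp only: mult.assoc)
  also have "\<dots> = (s * (a^2 * s * D - \<rho>^2) * Xph + a * s * (S + 2*M*r*p) * Xr)^2
         - S^2 * s * (D*p^2 - 2*\<rho>*p + a^2 * s) * Xr^2"
    unfolding D_def kerr_Delta_def \<rho>_def S by algebra
  finally show ?thesis .
qed

text \<open>The level sets of \<open>v - k(r)\<close> with \<open>k'(r) = p\<close> are spacelike at radius \<open>r\<close> when this
  quadratic is negative: in the exact condition \<open>a\<^sup>2\<close> is replaced by \<open>a\<^sup>2 sin\<^sup>2\<theta> \<le> a\<^sup>2\<close>.\<close>

definition kerr_slope_quadratic :: "real \<Rightarrow> real \<Rightarrow> real \<Rightarrow> real \<Rightarrow> real" where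
  "kerr_slope_quadratic M a r p = kerr_Delta M a r * p^2 - 2 * (r^2 + a^2) * p + a^2"

lemma kerr_g_neg_of_slope_quadratic_neg:
  assumes "\<bar>a\<bar> < M" "kerr_rplus M a < r" "0 < th" "th < pi"
    and X: "(p*Xr, Xr, Xth, Xph) \<noteq> (0, 0, 0, 0)"
    and F: "kerr_slope_quadratic M a r p < 0"
  shows "kerr_g M a r th (p*Xr) Xr Xth Xph < 0"
proof -
  define S where "S = kerr_Sigma a r th"
  define s where "s = (sin th)^2"
  define D where "D = kerr_Delta M a r"
  define \<rho> where "\<rho> = r^2 + a^2"
  define Cph where "Cph = s * (a^2 * s * D - \<rho>^2)"
  define W where "W = Cph * Xph + a * s * (S + 2*M*r*p) * Xr"
  define G where "G = D*p^2 - 2*\<rho>*p + a^2 * s"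
  have r: "0 < r"
    using assms(2) subextremal_kerr_rplus[OF assms(1)] by linarith
  have s: "0 < s" "s \<le> 1"
    unfolding s_def using sin_gt_zero[OF assms(3,4)] by (simp_all add: abs_square_le_1)
  have S: "0 < S"
    unfolding S_def kerr_Sigma_def using r by (simp add: add_pos_nonneg)
  have D: "0 < D" "D < \<rho>"
    unfolding D_def \<rho>_def using kerr_Delta_pos[OF assms(1,2)] r assms(1) by (auto simp: kerr_Delta_def)
  have a2s: "a^2 * s \<le> a^2"
    using s by (intro mult_left_le) auto
  have "a^2 * s * D \<le> \<rho> * D"
    using a2s D unfolding \<rho>_def by (intro mult_right_mono) (auto simp: add_increasing)
  also have "\<dots> < \<rho>^2"
    using D by (simp add: power2_eq_square)
  finally have Cph: "Cph < 0"
    unfolding Cph_def using s by (simp add: mult_pos_neg)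
  have G: "G < 0"
    using a2s F unfolding G_def kerr_slope_quadratic_def D_def \<rho>_def by linarith
  have square: "Cph * S * (kerr_g M a r th (p*Xr) Xr Xth Xph + S*Xth^2) = W^2 - S^2 * s * G * Xr^2"
    unfolding Cph_def W_def G_def S_def s_def D_def \<rho>_def
    by (rule kerr_g_tangent_square) (use S S_def in simp)
  show ?thesis
  proof (cases "Xr = 0 \<and> Xph = 0")
    case True
    then have "kerr_g M a r th (p*Xr) Xr Xth Xph + S*Xth^2 = 0"
      using square Cph S unfolding W_def by simp
    moreover have "0 < S * Xth^2"
      using X True S by auto
    ultimately show ?thesis
      by linarith
  next
    case False
    have "0 < W^2 - S^2 * s * G * Xr^2"
    proof (cases "Xr = 0")
      case True
      then show ?thesis
        using False Cph unfolding W_def by simp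
    next
      case False
      then have "S^2 * s * G * Xr^2 < 0"
        using S s G by (simp add: mult_pos_neg mult_neg_pos)
      moreover have "0 \<le> W^2"
        by simp
      ultimately show ?thesis
        by linarith
    qed
    moreover have "Cph * S < 0"
      using Cph S by (simp add: mult_neg_pos)
    ultimately have "kerr_g M a r th (p*Xr) Xr Xth Xph + S*Xth^2 < 0"
      unfolding square[symmetric] using Cph S by (simp add: zero_less_mult_iff)
    moreover have "0 \<le> S * Xth^2"
      using S by simp
    ultimately show ?thesis
      by linarith
  qed
qed

section \<open>The hyperboloidal height function\<close>

lemma convex_quadratic_neg_between:
  fixes A B C u w p :: real
  assumes "0 \<le> A" "A*u^2 + B*u + C < 0" "A*w^2 + B*w + C < 0" "u \<le> p" "p \<le> w"
  shows "A*p^2 + B*p + C < 0"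
proof (cases "u = w")
  case True
  then show ?thesis using assms by simp
next
  case False
  then have wu: "0 < w - u" using assms(4,5) by simp
  have "(w - u) * (A*p^2 + B*p + C)
      = (w - p) * (A*u^2 + B*u + C) + (p - u) * (A*w^2 + B*w + C) - A * (w - u) * (p - u) * (w - p)"
    by algebra
  also have "\<dots> < 0"
  proof -
    have "(w - p) * (A*u^2 + B*u + C) + (p - u) * (A*w^2 + B*w + C) < 0"
    proof (cases "p < w")
      case True
      then have "(w - p) * (A*u^2 + B*u + C) < 0"
        using assms(2) by (simp add: mult_pos_neg)
      moreover have "(p - u) * (A*w^2 + B*w + C) \<le> 0"
        using assms(3,4) by (simp add: mult_nonneg_nonpos)
      ultimately show ?thesis by linarith
    next
      case False
      then have "p = w" using assms(5) by simp
      then show ?thesis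
        using assms(3) wu by (simp add: mult_pos_neg)
    qed
    moreover have "0 \<le> A * (w - u) * (p - u) * (w - p)"
      using assms wu by simp
    ultimately show ?thesis by linarith
  qed
  finally show ?thesis
    using wu by (simp add: mult_less_0_iff)
qed

text \<open>The function \<open>h\<close> of the statement, with \<open>rp = r\<^sub>+\<close> and \<open>c = (C\<^sub>h\<^sub>y\<^sub>p - 1) M\<close>.\<close>

definition hyp_time :: "real \<Rightarrow> real \<Rightarrow> real \<Rightarrow> real \<Rightarrow> real" where
  "hyp_time M rp c r = 2 * (r - rp) + 4 * M * ln (r / rp) + 3 * M^2 * (rp - r)^2 / (rp * r^2)
     + 2 * M * arctan (c / r) - 2 * M * arctan (c / rp)"

definition hyp_slope :: "real \<Rightarrow> real \<Rightarrow> real \<Rightarrow> real \<Rightarrow> real" where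
  "hyp_slope M rp c r = 2 + 4*M/r + 6*M^2*(r - rp)/r^3 - 2*M*c/(r^2 + c^2)"

lemma hyp_time_has_derivative:
  assumes "0 < r" "0 < rp"
  shows "(hyp_time M rp c has_real_derivative hyp_slope M rp c r) (at r)"
proof -
  have "0 < r^2 + c^2"
    using assms by (simp add: add_pos_nonneg)
  then have arctan: "((\<lambda>r. arctan (c / r)) has_real_derivative - c / (r^2 + c^2)) (at r)"
    using assms by (auto intro!: derivative_eq_intros simp: power2_eq_square field_simps)
  have ln: "((\<lambda>r. ln (r / rp)) has_real_derivative 1 / r) (at r)"
    using assms by (auto intro!: derivative_eq_intros)
  have quot: "((\<lambda>r. (rp - r)^2 / (rp * r^2)) has_real_derivative 2 * (r - rp) / r^3) (at r)"
    using assms by (auto intro!: derivative_eq_intros simp: power2_eq_square power3_eq_cube field_simps)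
  have "((\<lambda>r. 2 * (r - rp) + 4 * M * ln (r / rp) + 3 * M^2 * ((rp - r)^2 / (rp * r^2))
      + 2 * M * arctan (c / r) - 2 * M * arctan (c / rp)) has_real_derivative
      2 * (1 - 0) + 4 * M * (1 / r) + 3 * M^2 * (2 * (r - rp) / r^3) + 2 * M * (- c / (r^2 + c^2)) - 0) (at r)"
    by (intro DERIV_add DERIV_diff DERIV_cmult arctan ln quot DERIV_const DERIV_ident)
  then show ?thesis
    unfolding hyp_time_def hyp_slope_def by (simp add: algebra_simps)
qed

lemma deriv_hyp_time:
  assumes "0 < r" "0 < rp"
  shows "deriv (hyp_time M rp c) r = hyp_slope M rp c r"
  using hyp_time_has_derivative[OF assms] by (rule DERIV_imp_deriv)

lemma arctan_slope_le:
  fixes M r c :: real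
  assumes "0 \<le> M" "0 < r"
  shows "2*M*c/(r^2 + c^2) \<le> M/r"
proof -
  have "0 \<le> (r - c)^2"
    by simp
  then have "2*c*r \<le> r^2 + c^2"
    by (simp add: power2_eq_square algebra_simps)
  then have "M * (2*c*r) \<le> M * (r^2 + c^2)"
    using assms(1) by (rule mult_left_mono)
  moreover have "0 < r^2 + c^2"
    using assms(2) by (simp add: add_pos_nonneg)
  ultimately show ?thesis
    using assms(2) by (simp add: divide_simps algebra_simps)
qed

lemma hyp_slope_ge_two:
  assumes "0 \<le> M" "0 < rp" "rp \<le> r"
  shows "2 \<le> hyp_slope M rp c r"
proof -
  have "0 < r" using assms by linarith
  then have "M/r \<le> 4*M/r" "0 \<le> 6*M^2*(r - rp)/r^3"
    using assms by (simp_all add: divide_right_mono)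
  then show ?thesis
    unfolding hyp_slope_def using arctan_slope_le[OF assms(1) \<open>0 < r\<close>, of c] by linarith
qed

lemma hyp_slope_le_hyp_slope0:
  assumes "0 \<le> M" "0 \<le> c"
  shows "hyp_slope M rp c r \<le> hyp_slope M rp 0 r"
  unfolding hyp_slope_def using assms by (simp add: add_nonneg_nonneg)

text \<open>Writing \<open>r = M + y + x\<close> and \<open>M = y + z\<close>, with \<open>y = \<surd>(M\<^sup>2 - a\<^sup>2)\<close>, the quadratic at
  \<open>p = h'|\<^sub>c\<^sub>=\<^sub>0\<close>, times \<open>r\<^sup>6\<close>, is minus a polynomial in \<open>x, y, z\<close> with nonnegative
  coefficients.\<close>

lemma hyp_slope0_certificate:
  fixes x y M r A :: real
  assumes "0 < x" "0 < y" "y \<le> M" and r: "r = M + y + x" and A: "A = M^2 - y^2"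
  shows "(r^2 - 2*M*r + A) * (2*r^3 + 4*M*r^2 + 6*M^2*x)^2
    - 2 * (r^2 + A) * (2*r^3 + 4*M*r^2 + 6*M^2*x) * r^3 + A * r^6 < 0"
proof -
  define z where "z = M - y"
  have M: "M = y + z" and "0 \<le> z"
    unfolding z_def using assms(3) by simp_all
  define P where "P = 4 * y^2 * x^6 + 104 * y^3 * x^5 + 860 * y^4 * x^4 + 3384 * y^5 * x^3
      + 6592 * y^6 * x^2 + 6016 * y^7 * x + 2048 * y^8 + 3 * z^2 * x^6
      + 54 * z^3 * x^5 + 257 * z^4 * x^4 + 560 * z^5 * x^3 + 465 * z^6 * x^2
      + 170 * z^7 * x + 23 * z^8 + 6 * y * z * x^6 + 192 * y * z^2 * x^5
      + 1358 * y * z^3 * x^4 + 3936 * y * z^4 * x^3 + 4386 * y * z^5 * x^2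
      + 2024 * y * z^6 * x + 330 * y * z^7 + 236 * y^2 * z * x^5
      + 2720 * y^2 * z^2 * x^4 + 11172 * y^2 * z^3 * x^3 + 17144 * y^2 * z^4 * x^2
      + 10256 * y^2 * z^5 * x + 2060 * y^2 * z^6 + 2464 * y^3 * z * x^4
      + 16000 * y^3 * z^2 * x^3 + 35576 * y^3 * z^3 * x^2 + 28664 * y^3 * z^4 * x
      + 7304 * y^3 * z^5 + 11568 * y^4 * z * x^3 + 41376 * y^4 * z^2 * x^2
      + 47712 * y^4 * z^3 * x + 16080 * y^4 * z^4 + 25600 * y^5 * z * x^2
      + 47296 * y^5 * z^2 * x + 22496 * y^5 * z^3 + 25856 * y^6 * z * x
      + 19520 * y^6 * z^2 + 9600 * y^7 * z"
  have "0 < P"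
    unfolding P_def using assms(1,2) \<open>0 \<le> z\<close>
    by (intro add_pos_nonneg mult_pos_pos mult_nonneg_nonneg add_nonneg_nonneg zero_le_power zero_less_power) auto
  moreover have "(r^2 - 2*M*r + A) * (2*r^3 + 4*M*r^2 + 6*M^2*x)^2
    - 2 * (r^2 + A) * (2*r^3 + 4*M*r^2 + 6*M^2*x) * r^3 + A * r^6 = - P"
    unfolding P_def r A unfolding M by algebra
  ultimately show ?thesis by linarith
qed

lemma kerr_slope_quadratic_hyp_slope0_neg:
  assumes "\<bar>a\<bar> < M" "kerr_rplus M a < r"
  shows "kerr_slope_quadratic M a r (hyp_slope M (kerr_rplus M a) 0 r) < 0"
proof -
  define y where "y = sqrt (M^2 - a^2)"
  note y = subextremal_kerr_rplus[OF assms(1), folded y_def]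
  define x where "x = r - kerr_rplus M a"
  have "0 < x" "r = M + y + x" "0 < r"
    unfolding x_def using y assms(2) by auto
  define p0 where "p0 = hyp_slope M (kerr_rplus M a) 0 r"
  have p0: "p0 * r^3 = 2*r^3 + 4*M*r^2 + 6*M^2*x"
    unfolding p0_def hyp_slope_def x_def using \<open>0 < r\<close>
    by (simp add: field_simps power2_eq_square power3_eq_cube)
  have "r^6 * kerr_slope_quadratic M a r p0
      = (r^2 - 2*M*r + a^2) * (p0 * r^3)^2 - 2 * (r^2 + a^2) * (p0 * r^3) * r^3 + a^2 * r^6"
    unfolding kerr_slope_quadratic_def kerr_Delta_def by algebra
  also have "\<dots> < 0"
    unfolding p0 using \<open>0 < x\<close> y \<open>r = M + y + x\<close>
    by (intro hyp_slope0_certificate[of x y M r "a^2"]) auto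
  finally show ?thesis
    using \<open>0 < r\<close> unfolding p0_def by (simp add: mult_less_0_iff)
qed

lemma kerr_slope_quadratic_hyp_slope_neg:
  assumes "\<bar>a\<bar> < M" "kerr_rplus M a < r" "0 \<le> c"
  shows "kerr_slope_quadratic M a r (hyp_slope M (kerr_rplus M a) c r) < 0"
proof -
  note rp = subextremal_kerr_rplus[OF assms(1)]
  have "0 < r" "0 \<le> M"
    using assms(1,2) rp by linarith+
  have quadratic: "kerr_slope_quadratic M a r p = kerr_Delta M a r * p^2 + (- 2 * (r^2 + a^2)) * p + a^2" for p
    unfolding kerr_slope_quadratic_def by algebra
  have "0 < r^2 + 2*M*r"
    using \<open>0 < r\<close> \<open>0 \<le> M\<close> by (intro add_pos_nonneg) simp_all
  then have at_one: "kerr_slope_quadratic M a r 1 < 0"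
    unfolding kerr_slope_quadratic_def kerr_Delta_def by simp
  have "1 \<le> hyp_slope M (kerr_rplus M a) c r"
    using hyp_slope_ge_two[of M "kerr_rplus M a" r c] \<open>0 \<le> M\<close> rp assms(2) by simp
  from less_imp_le[OF kerr_Delta_pos[OF assms(1,2)]] at_one
    kerr_slope_quadratic_hyp_slope0_neg[OF assms(1,2)] this
    hyp_slope_le_hyp_slope0[OF \<open>0 \<le> M\<close> assms(3), where rp = "kerr_rplus M a" and r = r]
  show ?thesis
    unfolding quadratic by (rule convex_quadratic_neg_between)
qed

lemma hyp_time_level_sets_spacelike:
  assumes "\<bar>a\<bar> < M" "0 \<le> c"
    and "kerr_rplus M a < r" "0 < th" "th < pi"
    and "(Xv, Xr, Xth, Xph) \<noteq> (0, 0, 0, 0)"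
    and "dt_apply (hyp_time M (kerr_rplus M a) c) r Xv Xr = 0"
  shows "kerr_g M a r th Xv Xr Xth Xph < 0"
proof -
  have "0 < kerr_rplus M a" "0 < r"
    using kerr_rplus_pos[OF assms(1)] assms(3) by linarith+
  then have Xv: "Xv = hyp_slope M (kerr_rplus M a) c r * Xr"
    using assms(7) deriv_hyp_time unfolding dt_apply_def by simp
  show ?thesis
    unfolding Xv using assms(6) unfolding Xv
    by (rule kerr_g_neg_of_slope_quadratic_neg[OF assms(1,3,4,5) _
          kerr_slope_quadratic_hyp_slope_neg[OF assms(1,3,2)]])
qed

lemma hyp_slope_poly_fraction:
  fixes M rp c r :: real
  assumes "0 < r"
  shows "hyp_slope M rp c r
    = poly [: -6*M^2*rp*c^2, 6*M^2*c^2, -6*M^2*rp + 4*M*c^2, 6*M^2 + 2*c^2 - 2*M*c, 4*M, 2 :] r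
      / poly [: 0, 0, 0, c^2, 0, 1 :] r"
proof -
  have "0 < r^2 + c^2"
    using assms by (simp add: add_pos_nonneg)
  then have "r^2 + c^2 \<noteq> 0" "c^2 + r * r \<noteq> 0"
    by (metis add.commute power2_eq_square order_less_irrefl)+
  then show ?thesis
    unfolding hyp_slope_def using assms by (simp add: divide_simps) algebra
qed

lemma hyp_slope_inverse_poly_fraction:
  fixes M rp c R :: real
  assumes "0 < R"
  shows "hyp_slope M rp c (1/R)
    = poly [: 2, 4*M, 6*M^2 + 2*c^2 - 2*M*c, -6*M^2*rp + 4*M*c^2, 6*M^2*c^2, -6*M^2*rp*c^2 :] R
      / poly [: 1, 0, c^2 :] R"
proof -
  have "0 \<le> c^2 * R^2" "0 \<le> c^2" "0 < (1/R)^2"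
    using assms by simp_all
  then have "1 + c^2 * R^2 \<noteq> 0" "(1/R)^2 + c^2 \<noteq> 0"
    by linarith+
  then show ?thesis
    unfolding hyp_slope_def using assms by (simp add: divide_simps) algebra
qed

lemma smooth_on_hyp_time:
  assumes "0 < rp"
  shows "smooth_on (hyp_time M rp c) {0<..}"
proof (rule smooth_on_antiderivative)
  let ?P = "[: -6*M^2*rp*c^2, 6*M^2*c^2, -6*M^2*rp + 4*M*c^2, 6*M^2 + 2*c^2 - 2*M*c, 4*M, 2 :]"
  let ?D = "[: 0, 0, 0, c^2, 0, 1 :] :: real poly"
  have "poly ?D x \<noteq> 0" if "x \<in> {0<..}" for x
  proof -
    have "0 < c^2 + x * x"
      using that by (intro add_nonneg_pos) simp_all
    then show ?thesis
      using that by simp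
  qed
  then show "smooth_on (\<lambda>x. poly ?P x / poly ?D x) {0<..}"
    by (intro smooth_on_poly_fraction) auto
  show "(hyp_time M rp c has_real_derivative poly ?P x / poly ?D x) (at x)" if "x \<in> {0<..}" for x
    using hyp_time_has_derivative[of x rp M c] hyp_slope_poly_fraction[of x M rp c] assms that by simp
qed simp

lemma smooth_hyp_slope_inverse:
  "\<exists>K. smooth_on K UNIV \<and> (\<forall>R > 0. K R = hyp_slope M rp c (1/R))"
proof (intro exI conjI)
  let ?Q = "[: 2, 4*M, 6*M^2 + 2*c^2 - 2*M*c, -6*M^2*rp + 4*M*c^2, 6*M^2*c^2, -6*M^2*rp*c^2 :]"
  let ?D = "[: 1, 0, c^2 :] :: real poly"
  have "poly ?D x \<noteq> 0" for x
  proof -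
    have "0 < 1 + c^2 * x^2"
      by (intro add_pos_nonneg) simp_all
    then show ?thesis
      by (simp add: algebra_simps power2_eq_square)
  qed
  then show "smooth_on (\<lambda>R. poly ?Q R / poly ?D R) UNIV"
    by (intro smooth_on_poly_fraction) auto
  show "\<forall>R > 0. poly ?Q R / poly ?D R = hyp_slope M rp c (1/R)"
    using hyp_slope_inverse_poly_fraction by simp
qed

lemma hyp_slope_tendsto: "(hyp_slope M rp c \<longlongrightarrow> 2) at_top"
  unfolding hyp_slope_def by real_asymp

lemma hyp_time_over_r_tendsto:
  assumes "0 < rp"
  shows "((\<lambda>r. hyp_time M rp c r / r) \<longlongrightarrow> 2) at_top"
proof -
  have "((\<lambda>r. (2 * (r - rp) + 4 * M * ln (r / rp) + 3 * M^2 * (rp - r)^2 / (rp * r^2)) / r) \<longlongrightarrow> 2) at_top"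
    using assms by real_asymp
  moreover have "((\<lambda>r. 2 * M * arctan (c / r) - 2 * M * arctan (c / rp))
      \<longlongrightarrow> 2 * M * arctan 0 - 2 * M * arctan (c / rp)) at_top"
    by (intro tendsto_intros) real_asymp
  then have "((\<lambda>r. (2 * M * arctan (c / r) - 2 * M * arctan (c / rp)) / r) \<longlongrightarrow> 0) at_top"
    by (rule tendsto_divide_0[OF _ filterlim_at_top_imp_at_infinity[OF filterlim_ident]])
  ultimately have "((\<lambda>r. (2 * (r - rp) + 4 * M * ln (r / rp) + 3 * M^2 * (rp - r)^2 / (rp * r^2)) / r
      + (2 * M * arctan (c / r) - 2 * M * arctan (c / rp)) / r) \<longlongrightarrow> 2 + 0) at_top"
    by (rule tendsto_add)
  moreover have "hyp_time M rp c r / r = (2 * (r - rp) + 4 * M * ln (r / rp) + 3 * M^2 * (rp - r)^2 / (rp * r^2)) / r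
      + (2 * M * arctan (c / r) - 2 * M * arctan (c / rp)) / r" for r
    unfolding hyp_time_def by (simp add: add_divide_distrib diff_divide_distrib)
  ultimately show ?thesis
    by simp
qed

lemma V_dt_hyp_time_tendsto:
  assumes "0 < M" "0 < rp"
  shows "((\<lambda>r. r^2 / M^2 * V_dt M a (hyp_time M rp c) r) \<longlongrightarrow> 1 + c / M) at_top"
proof -
  have "eventually (\<lambda>r. r^2 / M^2 * (1 - hyp_slope M rp c r * kerr_Delta M a r / (2 * (a^2 + r^2)))
      = r^2 / M^2 * V_dt M a (hyp_time M rp c) r) at_top"
    using eventually_gt_at_top[of 0]
    by eventually_elim (use assms in \<open>simp add: V_dt_def dt_apply_def deriv_hyp_time\<close>)
  moreover have "((\<lambda>r. r^2 / M^2 * (1 - hyp_slope M rp c r * kerr_Delta M a r / (2 * (a^2 + r^2))))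
      \<longlongrightarrow> 1 + c / M) at_top"
    unfolding hyp_slope_def kerr_Delta_def using assms
    by real_asymp (use assms in \<open>simp add: field_simps power2_eq_square\<close>)
  ultimately show ?thesis
    by (rule Lim_transform_eventually[rotated])
qed

lemma Y_dt_hyp_time_tendsto:
  assumes "0 < rp"
  shows "(Y_dt (hyp_time M rp c) \<longlongrightarrow> 2) at_top"
proof -
  have "eventually (\<lambda>r. hyp_slope M rp c r = Y_dt (hyp_time M rp c) r) at_top"
    using eventually_gt_at_top[of 0]
    by eventually_elim (use assms in \<open>simp add: Y_dt_def dt_apply_def deriv_hyp_time\<close>)
  then show ?thesis
    using hyp_slope_tendsto by (rule Lim_transform_eventually[rotated])
qed

lemma regular_future_hyperboloidal_hyp_time:
  assumes "0 < M" "\<bar>a\<bar> < M" "0 \<le> c"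
  shows "regular_future_hyperboloidal M a (hyp_time M (kerr_rplus M a) c)"
  unfolding regular_future_hyperboloidal_def Let_def
proof (intro conjI)
  let ?rp = "kerr_rplus M a" and ?h = "hyp_time M (kerr_rplus M a) c"
  have rp: "0 < ?rp"
    using kerr_rplus_pos[OF assms(2)] .
  show "\<exists>U. open U \<and> {?rp..} \<subseteq> U \<and> smooth_on ?h U"
    using smooth_on_hyp_time[OF rp] rp by (intro exI[of _ "{0<..}"]) auto
  show "\<exists>U K. open U \<and> {0..1/?rp} \<subseteq> U \<and> smooth_on K U \<and> (\<forall>R\<in>U. R > 0 \<longrightarrow> K R = deriv ?h (1/R))"
    using smooth_hyp_slope_inverse[of M ?rp c] deriv_hyp_time[OF _ rp] by (intro exI[of _ UNIV]) simp
  show "\<forall>r th Xv Xr Xth Xph. ?rp < r \<and> 0 < th \<and> th < pi \<and> (Xv, Xr, Xth, Xph) \<noteq> (0, 0, 0, 0)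
      \<and> dt_apply ?h r Xv Xr = 0 \<longrightarrow> kerr_g M a r th Xv Xr Xth Xph < 0"
    using hyp_time_level_sets_spacelike[OF assms(2,3)] by blast
  show "\<exists>L>0. ((\<lambda>r. r^2 / M^2 * V_dt M a ?h r) \<longlongrightarrow> L) at_top"
    using V_dt_hyp_time_tendsto[OF assms(1) rp] assms(1,3)
    by (intro exI[of _ "1 + c / M"]) (simp add: add_pos_nonneg)
  show "(Y_dt ?h \<longlongrightarrow> 2) at_top"
    using Y_dt_hyp_time_tendsto[OF rp] .
qed

theorem lemma2p21:
  fixes M a C :: real and h :: "real \<Rightarrow> real"
  assumes "M > 0" and "\<bar>a\<bar> < M" and "C \<ge> 1"
    and "h = (\<lambda>r. let rp = kerr_rplus M a in
               2 * (r - rp) + 4 * M * ln (r / rp) + 3 * M^2 * (rp - r)^2 / (rp * r^2)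
               + 2 * M * arctan ((C - 1) * M / r) - 2 * M * arctan ((C - 1) * M / rp))"
  shows "regular_future_hyperboloidal M a h
         \<and> h (kerr_rplus M a) = 0
         \<and> (\<forall>r \<ge> kerr_rplus M a. deriv h r \<ge> 0)
         \<and> ((\<lambda>r. h r / r) \<longlongrightarrow> 2) at_top
         \<and> ((\<lambda>r. r^2 / M^2 * V_dt M a h r) \<longlongrightarrow> C) at_top"
proof -
  define rp where "rp = kerr_rplus M a"
  define c where "c = (C - 1) * M"
  have rp: "0 < rp"
    unfolding rp_def using kerr_rplus_pos[OF assms(2)] .
  have h: "h = hyp_time M rp c"
    unfolding assms(4) hyp_time_def rp_def c_def Let_def ..
  have "0 \<le> c" "1 + c / M = C"
    unfolding c_def using assms(1,3) by simp_all
  moreover have "deriv h r \<ge> 0" if "rp \<le> r" for r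
    using deriv_hyp_time[of r rp M c] hyp_slope_ge_two[of M rp r c] assms(1) rp that
    unfolding h by simp
  ultimately show ?thesis
    using regular_future_hyperboloidal_hyp_time[OF assms(1,2)] hyp_time_over_r_tendsto[OF rp]
      V_dt_hyp_time_tendsto[OF assms(1) rp, of a c]
    unfolding rp_def[symmetric] h by (simp add: hyp_time_def)
qed

end
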